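(* Let $A\in\mathbb Q^{n\times n}$, $X_0\in\mathbb Q^n$ with $X_0(1)=0$, $C=[1,\mathbf 0_{n-1}]$. Define $\lambda:=\max_i\sum_{j=1}^n|A_{ij}|+1$, $P_2:=\phi_1(A)-\lambda I_{2n}$, $Y_2:=\phi_2(X_0)$, the vector $\boldsymbol\beta\in\mathbb Q^{2n}$ by $\boldsymbol\beta(2i-1)=\boldsymbol\beta(2i)=\max(0,-(P_2Y_2)(2i-1),-(P_2Y_2)(2i))$ for $1\le i\le n$, and $\gamma:=\max_i\big((P_2Y_2)(i)+\boldsymbol\beta(i)\big)$; assume $\gamma>0$. Let $$P:=\begin{bmatrix}P_2&(P_2Y_2+\boldsymbol\beta)/\gamma\\ \mathbf 0_{2n}&0\end{bmatrix}\in\mathbb Q^{(2n+1)\times(2n+1)}.$$ Then for all $t$, $Ce^{At}X_0=\gamma e^{\lambda t}\,C'e^{Pt}Y_0$ with $C'=[1,-1,\mathbf 0_{2n-1}]$ and $Y_0=[\mathbf 0_{2n},1]^T$. Moreover $P$ has nonnegative off-diagonal entries and every row sum of $P$ is $\le0$.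
   Context: $\phi_1(A)\in\mathbb Q_{\ge0}^{2n\times2n}$ is obtained from $A$ by replacing each entry $A_{ij}$ by the $2\times2$ block $\begin{bmatrix}\alpha_{ij}&\beta_{ij}\\\beta_{ij}&\alpha_{ij}\end{bmatrix}$, where $\alpha_{ij}=\max(A_{ij},0)$, $\beta_{ij}=\max(-A_{ij},0)$. $\phi_2(X)\in\mathbb Q^{2n}$ replaces each entry $X(i)$ of $X\in\mathbb Q^n$ by the two entries $X(i),0$. $\mathbf 0_m$ is the zero row vector of length $m$; $I_{2n}$ is the identity. *)

theory Defs
  imports Complex_Main "Jordan_Normal_Form.Matrix"
begin

text \<open>Matrices are JNF matrices over real with rational entries (indices 0-based).\<close>

definition mat_exp :: "real mat \<Rightarrow> real \<Rightarrow> real mat" where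
  "mat_exp A t = mat (dim_row A) (dim_col A)
     (\<lambda>(i,j). \<Sum>k. (t ^ k / fact k) * (A ^\<^sub>m k) $$ (i,j))"

text \<open>phi_1: entry a replaced by the 2x2 block [[max a 0, max (-a) 0],[max (-a) 0, max a 0]].\<close>
definition phi1 :: "real mat \<Rightarrow> real mat" where
  "phi1 A = mat (2 * dim_row A) (2 * dim_col A)
     (\<lambda>(i,j). if i mod 2 = j mod 2 then max (A $$ (i div 2, j div 2)) 0
              else max (- A $$ (i div 2, j div 2)) 0)"

definition phi2 :: "real vec \<Rightarrow> real vec" where
  "phi2 X = vec (2 * dim_vec X) (\<lambda>i. if even i then X $ (i div 2) else 0)"

definition lam :: "real mat \<Rightarrow> real" where
  "lam A = Max {(\<Sum>j<dim_col A. \<bar>A $$ (i,j)\<bar>) | i. i < dim_row A} + 1"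

definition P2_of :: "real mat \<Rightarrow> real mat" where
  "P2_of A = phi1 A - lam A \<cdot>\<^sub>m 1\<^sub>m (2 * dim_row A)"

definition beta_of :: "real mat \<Rightarrow> real vec \<Rightarrow> real vec" where
  "beta_of A X0 = (let v = P2_of A *\<^sub>v phi2 X0 in
     vec (2 * dim_vec X0) (\<lambda>i. max 0 (max (- v $ (2 * (i div 2))) (- v $ (2 * (i div 2) + 1)))))"

definition gamma_of :: "real mat \<Rightarrow> real vec \<Rightarrow> real" where
  "gamma_of A X0 = (let v = P2_of A *\<^sub>v phi2 X0; b = beta_of A X0 in
     Max {v $ i + b $ i | i. i < 2 * dim_vec X0})"

definition P_of :: "real mat \<Rightarrow> real vec \<Rightarrow> real mat" where
  "P_of A X0 = (let N = 2 * dim_vec X0; P2 = P2_of A; v = P2 *\<^sub>v phi2 X0;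
       b = beta_of A X0; g = gamma_of A X0 in
     mat (N + 1) (N + 1) (\<lambda>(i,j). if i < N \<and> j < N then P2 $$ (i,j)
        else if i < N \<and> j = N then (v $ i + b $ i) / g else 0))"

definition Y0_of :: "nat \<Rightarrow> real vec" where
  "Y0_of n = vec (2 * n + 1) (\<lambda>i. if i = 2 * n then 1 else 0)"

end

theory Submission
  imports Defs
begin

text \<open>
  Let D z be the vector of pair differences z(2l) - z(2l+1). Since alpha - beta = A entrywise,
  D phi1(A) = A D, hence D P2 = (A - lambda I) D, while D phi2(X) = X. The block form of P gives
  P^(k+1) Y0 = (P2^k w, 0) with w = (P2 Y2 + beta) / gamma, and since beta is constant on pairs,
  D w = (A - lambda I) X0 / gamma. Hence C' P^k Y0 = C (A - lambda I)^k X0 / gamma for k \<ge> 1, and for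
  k = 0 because X0(1) = 0. Summing the exponential series and using
  e^(At) = e^(lambda t) e^((A - lambda I) t) yields the identity. The off-diagonal entries of P are
  entries of phi1(A) or of w, hence nonnegative; a row of P2 sums to sum_j |A_ij| - lambda \<le> -1,
  and w \<le> 1 by the choice of gamma, so the row sums of P are nonpositive.
\<close>

section \<open>Matrix powers acting on vectors\<close>

lemma index_mult_mat_vec_sum:
  assumes "M \<in> carrier_mat nr m" "x \<in> carrier_vec m" "r < nr"
  shows "(M *\<^sub>v x) $ r = (\<Sum>l<m. M $$ (r,l) * x $ l)"
  using assms by (auto simp: scalar_prod_def lessThan_atLeast0 intro!: sum.cong)

lemma zero_mat_mult_vec:
  "(v :: 'a :: semiring_0 vec) \<in> carrier_vec m \<Longrightarrow> 0\<^sub>m k m *\<^sub>v v = 0\<^sub>v k"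
  by (intro eq_vecI) auto

lemma mult_mat_zero_vec:
  "(M :: 'a :: semiring_0 mat) \<in> carrier_mat k m \<Longrightarrow> M *\<^sub>v 0\<^sub>v m = 0\<^sub>v k"
  by (intro eq_vecI) auto

lemma smult_one_mat_mult_vec:
  "(y :: real vec) \<in> carrier_vec m \<Longrightarrow> (c \<cdot>\<^sub>m 1\<^sub>m m) *\<^sub>v y = c \<cdot>\<^sub>v y"
  by (intro eq_vecI) auto

lemma pow_mat_Suc_mult_vec_right:
  assumes "M \<in> carrier_mat m m" "x \<in> carrier_vec m"
  shows "M ^\<^sub>m Suc k *\<^sub>v x = M ^\<^sub>m k *\<^sub>v (M *\<^sub>v x)"
  using assms by (simp add: assoc_mult_mat_vec[of _ m m _ m])

lemma pow_mat_Suc_mult_vec: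
  assumes "M \<in> carrier_mat m m" "x \<in> carrier_vec m"
  shows "M ^\<^sub>m Suc k *\<^sub>v x = M *\<^sub>v (M ^\<^sub>m k *\<^sub>v x)"
  using assms(2)
proof (induction k arbitrary: x)
  case 0
  then show ?case using assms(1) by simp
next
  case (Suc k)
  have "M ^\<^sub>m Suc (Suc k) *\<^sub>v x = M ^\<^sub>m Suc k *\<^sub>v (M *\<^sub>v x)"
    using assms(1) Suc.prems by (rule pow_mat_Suc_mult_vec_right)
  also have "\<dots> = M *\<^sub>v (M ^\<^sub>m k *\<^sub>v (M *\<^sub>v x))"
    using assms(1) Suc by simp
  also have "M ^\<^sub>m k *\<^sub>v (M *\<^sub>v x) = M ^\<^sub>m Suc k *\<^sub>v x"
    using assms(1) Suc.prems by (rule pow_mat_Suc_mult_vec_right[symmetric])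
  finally show ?case .
qed

lemma pow_mat_mult_vec_intertwine:
  assumes B: "B \<in> carrier_mat m m" and C: "C \<in> carrier_mat n n"
    and D_carrier: "\<And>z. z \<in> carrier_vec m \<Longrightarrow> D z \<in> carrier_vec n"
    and D_comm: "\<And>z. z \<in> carrier_vec m \<Longrightarrow> D (B *\<^sub>v z) = C *\<^sub>v D z"
    and z: "z \<in> carrier_vec m"
  shows "D (B ^\<^sub>m k *\<^sub>v z) = C ^\<^sub>m k *\<^sub>v D z"
proof (induction k)
  case 0
  show ?case using B C D_carrier[OF z] z by simp
next
  case (Suc k)
  have "D (B ^\<^sub>m Suc k *\<^sub>v z) = C *\<^sub>v D (B ^\<^sub>m k *\<^sub>v z)"
    unfolding pow_mat_Suc_mult_vec[OF B z]
    by (rule D_comm[OF mult_mat_vec_carrier[OF pow_carrier_mat[OF B] z]])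
  also have "\<dots> = C ^\<^sub>m Suc k *\<^sub>v D z"
    using Suc.IH by (simp only: pow_mat_Suc_mult_vec[OF C D_carrier[OF z]])
  finally show ?case .
qed

section \<open>The matrix exponential as a power series\<close>

lemma abs_pow_mat_entry_le:
  fixes M :: "real mat"
  assumes M: "M \<in> carrier_mat m m" and "i < m" "j < m"
  shows "\<bar>(M ^\<^sub>m k) $$ (i,j)\<bar> \<le> (\<Sum>a<m. \<Sum>b<m. \<bar>M $$ (a,b)\<bar>) ^ k"
  using assms(3)
proof (induction k arbitrary: j)
  case 0
  then show ?case using assms(2) M by simp
next
  case (Suc k)
  let ?K = "\<Sum>a<m. \<Sum>b<m. \<bar>M $$ (a,b)\<bar>"
  have "(M ^\<^sub>m Suc k) $$ (i,j) = (\<Sum>l<m. (M ^\<^sub>m k) $$ (i,l) * M $$ (l,j))"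
    using M assms(2) Suc.prems by (auto simp: scalar_prod_def lessThan_atLeast0 intro!: sum.cong)
  then have "\<bar>(M ^\<^sub>m Suc k) $$ (i,j)\<bar> \<le> (\<Sum>l<m. ?K ^ k * \<bar>M $$ (l,j)\<bar>)"
    using Suc.IH by (auto simp: abs_mult intro!: order_trans[OF sum_abs] sum_mono mult_right_mono)
  also have "\<dots> \<le> ?K ^ k * ?K"
  proof -
    have "\<bar>M $$ (l,j)\<bar> \<le> (\<Sum>b<m. \<bar>M $$ (l,b)\<bar>)" for l
      using Suc.prems by (intro member_le_sum) auto
    then have "(\<Sum>l<m. \<bar>M $$ (l,j)\<bar>) \<le> ?K" by (intro sum_mono)
    then show ?thesis by (simp add: sum_distrib_left[symmetric] mult_left_mono sum_nonneg)
  qed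
  finally show ?case by (simp add: mult.commute)
qed

lemma abs_pow_mat_mult_vec_le:
  fixes M :: "real mat"
  assumes M: "M \<in> carrier_mat m m" and x: "x \<in> carrier_vec m" and r: "r < m"
  shows "\<bar>(M ^\<^sub>m k *\<^sub>v x) $ r\<bar> \<le> (\<Sum>a<m. \<Sum>b<m. \<bar>M $$ (a,b)\<bar>) ^ k * (\<Sum>l<m. \<bar>x $ l\<bar>)"
proof -
  have "\<bar>(M ^\<^sub>m k *\<^sub>v x) $ r\<bar> \<le> (\<Sum>l<m. \<bar>(M ^\<^sub>m k) $$ (r,l)\<bar> * \<bar>x $ l\<bar>)"
    unfolding index_mult_mat_vec_sum[OF pow_carrier_mat[OF M] x r] abs_mult[symmetric] by (rule sum_abs)
  also have "\<dots> \<le> (\<Sum>l<m. (\<Sum>a<m. \<Sum>b<m. \<bar>M $$ (a,b)\<bar>) ^ k * \<bar>x $ l\<bar>)"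
    using abs_pow_mat_entry_le[OF M r] by (intro sum_mono mult_right_mono) auto
  finally show ?thesis by (simp add: sum_distrib_left)
qed

lemma summable_exp_series_pow_mat_mult_vec:
  fixes M :: "real mat"
  assumes "M \<in> carrier_mat m m" "x \<in> carrier_vec m" "r < m"
  shows "summable (\<lambda>k. \<bar>t ^ k / fact k * (M ^\<^sub>m k *\<^sub>v x) $ r\<bar>)"
proof (rule summable_comparison_test')
  define K where "K = (\<Sum>a<m. \<Sum>b<m. \<bar>M $$ (a,b)\<bar>)"
  define S where "S = (\<Sum>l<m. \<bar>x $ l\<bar>)"
  show "summable (\<lambda>k. (\<bar>t\<bar> * K) ^ k / fact k * S)"
    using summable_exp[of "\<bar>t\<bar> * K"] by (intro summable_mult2) (simp add: divide_inverse mult.commute)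
  fix k :: nat
  have "\<bar>t ^ k / fact k * (M ^\<^sub>m k *\<^sub>v x) $ r\<bar> = \<bar>t\<bar> ^ k / fact k * \<bar>(M ^\<^sub>m k *\<^sub>v x) $ r\<bar>"
    by (simp add: abs_mult power_abs)
  also have "\<dots> \<le> \<bar>t\<bar> ^ k / fact k * (K ^ k * S)"
    using abs_pow_mat_mult_vec_le[OF assms, of k] unfolding K_def S_def by (rule mult_left_mono) simp
  also have "\<dots> = (\<bar>t\<bar> * K) ^ k / fact k * S"
    by (simp add: power_mult_distrib)
  finally show "norm \<bar>t ^ k / fact k * (M ^\<^sub>m k *\<^sub>v x) $ r\<bar> \<le> (\<bar>t\<bar> * K) ^ k / fact k * S"
    by simp
qed

lemma mat_exp_mult_vec_sums:
  fixes M :: "real mat"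
  assumes M: "M \<in> carrier_mat m m" and x: "x \<in> carrier_vec m" and r: "r < m"
  shows "(\<lambda>k. t ^ k / fact k * (M ^\<^sub>m k *\<^sub>v x) $ r) sums (mat_exp M t *\<^sub>v x) $ r"
proof -
  have "(\<lambda>k. t ^ k / fact k * (M ^\<^sub>m k) $$ (r,l) * x $ l) sums (mat_exp M t $$ (r,l) * x $ l)"
    if l: "l < m" for l
  proof -
    have "(M ^\<^sub>m k *\<^sub>v unit_vec m l) $ r = (M ^\<^sub>m k) $$ (r,l)" for k
      using M l r by simp
    then have "summable (\<lambda>k. t ^ k / fact k * (M ^\<^sub>m k) $$ (r,l))"
      using summable_exp_series_pow_mat_mult_vec[OF M _ r, of "unit_vec m l" t]
      by (auto intro: summable_rabs_cancel)
    moreover have "mat_exp M t $$ (r,l) = (\<Sum>k. t ^ k / fact k * (M ^\<^sub>m k) $$ (r,l))"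
      using M l r unfolding mat_exp_def by (subst index_mat) auto
    ultimately show ?thesis by (simp only:) (intro sums_mult2 summable_sums)
  qed
  then have "(\<lambda>k. \<Sum>l<m. t ^ k / fact k * (M ^\<^sub>m k) $$ (r,l) * x $ l)
      sums (\<Sum>l<m. mat_exp M t $$ (r,l) * x $ l)"
    by (intro sums_sum) auto
  moreover have "(mat_exp M t *\<^sub>v x) $ r = (\<Sum>l<m. mat_exp M t $$ (r,l) * x $ l)"
    using M by (intro index_mult_mat_vec_sum[OF _ x r]) (simp add: mat_exp_def)
  moreover have "t ^ k / fact k * (M ^\<^sub>m k *\<^sub>v x) $ r = (\<Sum>l<m. t ^ k / fact k * (M ^\<^sub>m k) $$ (r,l) * x $ l)" for k
    using index_mult_mat_vec_sum[OF pow_carrier_mat[OF M] x r] by (simp add: sum_distrib_left mult.assoc)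
  ultimately show ?thesis by (simp only:)
qed

section \<open>Shifting a matrix by a multiple of the identity\<close>

lemma binomial_sum_Suc:
  fixes f :: "nat \<Rightarrow> real"
  shows "(\<Sum>i\<le>Suc k. of_nat (Suc k choose i) * c ^ (Suc k - i) * f i)
       = (\<Sum>i\<le>k. of_nat (k choose i) * c ^ (k - i) * f (Suc i))
         + c * (\<Sum>i\<le>k. of_nat (k choose i) * c ^ (k - i) * f i)"
proof -
  have "(\<Sum>i\<le>Suc k. of_nat (Suc k choose i) * c ^ (Suc k - i) * f i)
      = c ^ Suc k * f 0 + (\<Sum>i\<le>k. of_nat (k choose Suc i) * c ^ (k - i) * f (Suc i))
        + (\<Sum>i\<le>k. of_nat (k choose i) * c ^ (k - i) * f (Suc i))"
    by (subst sum.atMost_Suc_shift) (simp add: sum.distrib[symmetric] algebra_simps)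
  also have "c ^ Suc k * f 0 + (\<Sum>i\<le>k. of_nat (k choose Suc i) * c ^ (k - i) * f (Suc i))
      = (\<Sum>i\<le>Suc k. of_nat (k choose i) * c ^ (Suc k - i) * f i)"
    by (subst sum.atMost_Suc_shift) simp
  also have "\<dots> = (\<Sum>i\<le>k. c * (of_nat (k choose i) * c ^ (k - i) * f i))"
    by (simp add: Suc_diff_le binomial_eq_0 mult.assoc mult.left_commute)
  finally show ?thesis by (simp add: sum_distrib_left)
qed

lemma pow_mat_mult_vec_binomial:
  fixes A :: "real mat"
  assumes A: "A \<in> carrier_mat m m" and x: "x \<in> carrier_vec m"
  shows "r < m \<Longrightarrow> (A ^\<^sub>m k *\<^sub>v x) $ r
    = (\<Sum>i\<le>k. of_nat (k choose i) * c ^ (k - i) * ((A - c \<cdot>\<^sub>m 1\<^sub>m m) ^\<^sub>m i *\<^sub>v x) $ r)"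
proof (induction k arbitrary: r)
  case 0
  then show ?case using A x by simp
next
  case (Suc k)
  define M where "M = A - c \<cdot>\<^sub>m 1\<^sub>m m"
  have M: "M \<in> carrier_mat m m" using A by (auto simp: M_def)
  define y where "y = A ^\<^sub>m k *\<^sub>v x"
  have y: "y \<in> carrier_vec m" unfolding y_def by (rule mult_mat_vec_carrier[OF pow_carrier_mat[OF A] x])
  have "(A ^\<^sub>m Suc k *\<^sub>v x) $ r = (M *\<^sub>v y) $ r + c * y $ r"
  proof -
    have "A = M + c \<cdot>\<^sub>m 1\<^sub>m m" using A by (auto simp: M_def)
    then have "A *\<^sub>v y = M *\<^sub>v y + c \<cdot>\<^sub>v y"
      using M y by (simp add: add_mult_distrib_mat_vec[of _ m m] smult_one_mat_mult_vec)
    then show ?thesis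
      using pow_mat_Suc_mult_vec[OF A x] Suc.prems carrier_vecD[OF y] by (simp add: y_def del: index_mult_mat_vec)
  qed
  also have "(M *\<^sub>v y) $ r = (\<Sum>i\<le>k. of_nat (k choose i) * c ^ (k - i) * (M ^\<^sub>m Suc i *\<^sub>v x) $ r)"
  proof -
    have "(M *\<^sub>v y) $ r
        = (\<Sum>l<m. \<Sum>i\<le>k. M $$ (r,l) * (of_nat (k choose i) * c ^ (k - i) * (M ^\<^sub>m i *\<^sub>v x) $ l))"
      unfolding index_mult_mat_vec_sum[OF M y Suc.prems]
      by (intro sum.cong refl) (simp add: y_def Suc.IH M_def sum_distrib_left)
    also have "\<dots>
        = (\<Sum>i\<le>k. of_nat (k choose i) * c ^ (k - i) * (\<Sum>l<m. M $$ (r,l) * (M ^\<^sub>m i *\<^sub>v x) $ l))"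
      by (subst sum.swap) (simp add: sum_distrib_left algebra_simps)
    also have "\<dots> = (\<Sum>i\<le>k. of_nat (k choose i) * c ^ (k - i) * (M ^\<^sub>m Suc i *\<^sub>v x) $ r)"
      using index_mult_mat_vec_sum[OF M mult_mat_vec_carrier[OF pow_carrier_mat[OF M] x] Suc.prems]
      by (simp only: pow_mat_Suc_mult_vec[OF M x])
    finally show ?thesis .
  qed
  also have "y $ r = (\<Sum>i\<le>k. of_nat (k choose i) * c ^ (k - i) * (M ^\<^sub>m i *\<^sub>v x) $ r)"
    unfolding y_def M_def by (rule Suc.IH[OF Suc.prems])
  finally show ?case
    unfolding M_def[symmetric] binomial_sum_Suc[of k c "\<lambda>i. (M ^\<^sub>m i *\<^sub>v x) $ r"] .
qed

lemma exp_series_times_binomial_sums: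
  fixes b :: "nat \<Rightarrow> real"
  assumes "summable (\<lambda>k. \<bar>t ^ k / fact k * b k\<bar>)"
  shows "(\<lambda>k. t ^ k / fact k * (\<Sum>i\<le>k. of_nat (k choose i) * c ^ (k - i) * b i))
    sums ((\<Sum>k. t ^ k / fact k * b k) * exp (c * t))"
proof -
  have exp_sums: "(\<lambda>k. (c * t) ^ k / fact k) sums exp (c * t)"
    using exp_converges[of "c * t"] by (simp add: divide_inverse mult.commute)
  have "summable (\<lambda>k. norm ((c * t) ^ k / fact k))"
    using summable_exp[of "\<bar>c * t\<bar>"] by (simp add: abs_mult power_abs divide_inverse mult.commute)
  with assms have "(\<lambda>k. \<Sum>i\<le>k. t ^ i / fact i * b i * ((c * t) ^ (k - i) / fact (k - i)))
      sums ((\<Sum>k. t ^ k / fact k * b k) * (\<Sum>k. (c * t) ^ k / fact k))"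
    by (intro Cauchy_product_sums) simp_all
  moreover have "t ^ i / fact i * b i * ((c * t) ^ (k - i) / fact (k - i))
      = t ^ k / fact k * (of_nat (k choose i) * c ^ (k - i) * b i)" if "i \<le> k" for i k
  proof -
    have "t ^ k = t ^ i * t ^ (k - i)" using that by (simp flip: power_add)
    then show ?thesis unfolding binomial_fact[OF that] by (simp add: power_mult_distrib field_simps)
  qed
  then have "(\<Sum>i\<le>k. t ^ i / fact i * b i * ((c * t) ^ (k - i) / fact (k - i)))
      = t ^ k / fact k * (\<Sum>i\<le>k. of_nat (k choose i) * c ^ (k - i) * b i)" for k
    by (simp add: sum_distrib_left)
  ultimately show ?thesis using sums_unique[OF exp_sums] by simp
qed

lemma mat_exp_mult_vec_shift:
  fixes A :: "real mat"
  assumes A: "A \<in> carrier_mat m m" and x: "x \<in> carrier_vec m" and r: "r < m"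
  shows "(mat_exp A t *\<^sub>v x) $ r = (mat_exp (A - c \<cdot>\<^sub>m 1\<^sub>m m) t *\<^sub>v x) $ r * exp (c * t)"
proof -
  define M where "M = A - c \<cdot>\<^sub>m 1\<^sub>m m"
  have M: "M \<in> carrier_mat m m" using A by (auto simp: M_def)
  have "(\<lambda>k. t ^ k / fact k * (A ^\<^sub>m k *\<^sub>v x) $ r)
      sums ((\<Sum>k. t ^ k / fact k * (M ^\<^sub>m k *\<^sub>v x) $ r) * exp (c * t))"
    unfolding pow_mat_mult_vec_binomial[OF A x r, of _ c] M_def[symmetric]
    by (rule exp_series_times_binomial_sums[OF summable_exp_series_pow_mat_mult_vec[OF M x r]])
  moreover have "(\<Sum>k. t ^ k / fact k * (M ^\<^sub>m k *\<^sub>v x) $ r) = (mat_exp M t *\<^sub>v x) $ r"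
    using mat_exp_mult_vec_sums[OF M x r] by (rule sums_unique[symmetric])
  ultimately show ?thesis
    using sums_unique2[OF mat_exp_mult_vec_sums[OF A x r]] by (simp add: M_def)
qed

section \<open>Differences of coordinate pairs\<close>

definition pair_diff :: "nat \<Rightarrow> real vec \<Rightarrow> real vec" where
  "pair_diff n z = vec n (\<lambda>l. z $ (2*l) - z $ (2*l+1))"

lemma pair_diff_carrier: "pair_diff n z \<in> carrier_vec n"
  by (simp add: pair_diff_def)

lemma pair_diff_phi2: "X \<in> carrier_vec n \<Longrightarrow> pair_diff n (phi2 X) = X"
  by (auto simp: pair_diff_def phi2_def)

lemma sum_lessThan_double:
  fixes f :: "nat \<Rightarrow> 'a :: comm_monoid_add"
  shows "(\<Sum>j<2*n. f j) = (\<Sum>l<n. f (2*l) + f (2*l+1))"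
  by (induction n) (simp_all add: add_ac)

lemma pair_diff_phi1_minus_smult_mult_vec:
  assumes A: "A \<in> carrier_mat n n" and z: "z \<in> carrier_vec (2*n)"
  shows "pair_diff n ((phi1 A - c \<cdot>\<^sub>m 1\<^sub>m (2*n)) *\<^sub>v z) = (A - c \<cdot>\<^sub>m 1\<^sub>m n) *\<^sub>v pair_diff n z"
proof (rule eq_vecI)
  fix r assume "r < dim_vec ((A - c \<cdot>\<^sub>m 1\<^sub>m n) *\<^sub>v pair_diff n z)"
  then have r: "r < n" using A by simp
  define B where "B = phi1 A - c \<cdot>\<^sub>m 1\<^sub>m (2*n)"
  have B: "B \<in> carrier_mat (2*n) (2*n)" using A by (auto simp: B_def phi1_def)
  have B_entry: "B $$ (i,j) = (if i mod 2 = j mod 2 then max (A $$ (i div 2, j div 2)) 0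
      else max (- A $$ (i div 2, j div 2)) 0) - (if i = j then c else 0)" if "i < 2*n" "j < 2*n" for i j
    using A that by (auto simp: B_def phi1_def)
  have "pair_diff n (B *\<^sub>v z) $ r = (\<Sum>j<2*n. (B $$ (2*r,j) - B $$ (2*r+1,j)) * z $ j)"
    using r index_mult_mat_vec_sum[OF B z, of "2*r"] index_mult_mat_vec_sum[OF B z, of "2*r+1"]
    by (simp add: pair_diff_def sum_subtractf[symmetric] algebra_simps)
  also have "\<dots> = (\<Sum>l<n. (A - c \<cdot>\<^sub>m 1\<^sub>m n) $$ (r,l) * pair_diff n z $ l)"
    unfolding sum_lessThan_double
  proof (intro sum.cong refl)
    fix l assume "l \<in> {..<n}"
    then have l: "l < n" by simp
    have par: "Suc (2*r) \<noteq> 2*l" "2*r \<noteq> Suc (2*l)" by presburger+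
    have even_col: "B $$ (2*r,2*l) - B $$ (2*r+1,2*l) = (A - c \<cdot>\<^sub>m 1\<^sub>m n) $$ (r,l)"
      using r l A par by (simp add: B_entry max_def)
    have odd_col: "B $$ (2*r,2*l+1) - B $$ (2*r+1,2*l+1) = - (A - c \<cdot>\<^sub>m 1\<^sub>m n) $$ (r,l)"
      using r l A par by (simp add: B_entry max_def)
    show "(B $$ (2*r,2*l) - B $$ (2*r+1,2*l)) * z $ (2*l)
        + (B $$ (2*r,2*l+1) - B $$ (2*r+1,2*l+1)) * z $ (2*l+1)
      = (A - c \<cdot>\<^sub>m 1\<^sub>m n) $$ (r,l) * pair_diff n z $ l"
      unfolding even_col odd_col using l by (simp add: pair_diff_def algebra_simps)
  qed
  also have "\<dots> = ((A - c \<cdot>\<^sub>m 1\<^sub>m n) *\<^sub>v pair_diff n z) $ r"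
    using A r by (intro index_mult_mat_vec_sum[symmetric] pair_diff_carrier) auto
  finally show "pair_diff n (B *\<^sub>v z) $ r = ((A - c \<cdot>\<^sub>m 1\<^sub>m n) *\<^sub>v pair_diff n z) $ r" .
qed (use A in \<open>simp add: pair_diff_def\<close>)

lemma P2_of_carrier: "A \<in> carrier_mat n n \<Longrightarrow> P2_of A \<in> carrier_mat (2*n) (2*n)"
  by (auto simp: P2_of_def phi1_def)

lemma P2_of_entry:
  assumes "A \<in> carrier_mat n n" "i < 2*n" "j < 2*n"
  shows "P2_of A $$ (i,j) = (if i mod 2 = j mod 2 then max (A $$ (i div 2, j div 2)) 0
      else max (- A $$ (i div 2, j div 2)) 0) - (if i = j then lam A else 0)"
  using assms by (auto simp: P2_of_def phi1_def)

lemma pair_diff_P2_of_mult_vec: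
  assumes "A \<in> carrier_mat n n" "z \<in> carrier_vec (2*n)"
  shows "pair_diff n (P2_of A *\<^sub>v z) = (A - lam A \<cdot>\<^sub>m 1\<^sub>m n) *\<^sub>v pair_diff n z"
  using pair_diff_phi1_minus_smult_mult_vec[OF assms] assms(1) by (simp add: P2_of_def)

section \<open>The augmented matrix P\<close>

definition last_col_of :: "real mat \<Rightarrow> real vec \<Rightarrow> real vec" where
  "last_col_of A X0 = vec (2 * dim_vec X0)
     (\<lambda>i. ((P2_of A *\<^sub>v phi2 X0) $ i + beta_of A X0 $ i) / gamma_of A X0)"

lemma last_col_of_carrier: "X0 \<in> carrier_vec n \<Longrightarrow> last_col_of A X0 \<in> carrier_vec (2*n)"
  by (simp add: last_col_of_def)

lemma P_of_carrier: "X0 \<in> carrier_vec n \<Longrightarrow> P_of A X0 \<in> carrier_mat (2*n+1) (2*n+1)"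
  by (simp add: P_of_def Let_def)

lemma P_of_entry:
  assumes "X0 \<in> carrier_vec n" "i < 2*n+1" "j < 2*n+1"
  shows "P_of A X0 $$ (i,j) = (if i < 2*n \<and> j < 2*n then P2_of A $$ (i,j)
    else if i < 2*n \<and> j = 2*n then last_col_of A X0 $ i else 0)"
  using assms by (simp add: P_of_def last_col_of_def Let_def)

lemma P_of_four_block:
  assumes A: "A \<in> carrier_mat n n" and X0: "X0 \<in> carrier_vec n"
  shows "P_of A X0 = four_block_mat (P2_of A) (mat (2*n) 1 (\<lambda>(i,_). last_col_of A X0 $ i))
    (0\<^sub>m 1 (2*n)) (0\<^sub>m 1 1)"
  using P2_of_carrier[OF A] X0 by (intro eq_matI) (auto simp: P_of_entry carrier_matD[OF P_of_carrier[OF X0]])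

lemma Y0_of_carrier: "Y0_of n \<in> carrier_vec (2*n+1)"
  by (simp add: Y0_of_def)

lemma Y0_of_append: "Y0_of n = 0\<^sub>v (2*n) @\<^sub>v vec 1 (\<lambda>_. 1)"
  by (intro eq_vecI) (auto simp: Y0_of_def)

lemma pow_P_of_mult_Y0:
  assumes A: "A \<in> carrier_mat n n" and X0: "X0 \<in> carrier_vec n"
  shows "P_of A X0 ^\<^sub>m Suc k *\<^sub>v Y0_of n = (P2_of A ^\<^sub>m k *\<^sub>v last_col_of A X0) @\<^sub>v 0\<^sub>v 1"
proof -
  define B where "B = mat (2*n) 1 (\<lambda>(i,_). last_col_of A X0 $ i)"
  have P2: "P2_of A \<in> carrier_mat (2*n) (2*n)" using P2_of_carrier[OF A] .
  have B: "B \<in> carrier_mat (2*n) 1" by (simp add: B_def)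
  have P: "P_of A X0 \<in> carrier_mat (2*n+1) (2*n+1)" using P_of_carrier[OF X0] .
  have w: "last_col_of A X0 \<in> carrier_vec (2*n)" using last_col_of_carrier[OF X0] .
  have block: "P_of A X0 *\<^sub>v (u @\<^sub>v d) = (P2_of A *\<^sub>v u + B *\<^sub>v d) @\<^sub>v 0\<^sub>v 1"
    if "u \<in> carrier_vec (2*n)" "d \<in> carrier_vec 1" for u d
    unfolding P_of_four_block[OF A X0] B_def[symmetric]
    using four_block_mat_mult_vec[OF P2 B zero_carrier_mat zero_carrier_mat that] that
    by (simp add: zero_mat_mult_vec)
  show ?thesis
  proof (induction k)
    case 0
    have "B *\<^sub>v vec 1 (\<lambda>_. 1) = last_col_of A X0"
      using w by (intro eq_vecI) (auto simp: B_def scalar_prod_def)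
    then show ?case
      using block[of "0\<^sub>v (2*n)" "vec 1 (\<lambda>_. 1)"] P2 P w
      by (simp add: pow_mat_Suc_mult_vec Y0_of_append mult_mat_zero_vec)
  next
    case (Suc k)
    have u: "P2_of A ^\<^sub>m k *\<^sub>v last_col_of A X0 \<in> carrier_vec (2*n)"
      by (rule mult_mat_vec_carrier[OF pow_carrier_mat[OF P2] w])
    have "P_of A X0 ^\<^sub>m Suc (Suc k) *\<^sub>v Y0_of n = P_of A X0 *\<^sub>v (P_of A X0 ^\<^sub>m Suc k *\<^sub>v Y0_of n)"
      by (rule pow_mat_Suc_mult_vec[OF P Y0_of_carrier])
    also have "\<dots> = (P2_of A ^\<^sub>m Suc k *\<^sub>v last_col_of A X0) @\<^sub>v 0\<^sub>v 1"
      unfolding Suc block[OF u zero_carrier_vec] pow_mat_Suc_mult_vec[OF P2 w]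
      using B P2 u by (simp add: mult_mat_zero_vec)
    finally show ?case .
  qed
qed

lemma pair_diff_last_col_of:
  assumes A: "A \<in> carrier_mat n n" and X0: "X0 \<in> carrier_vec n"
  shows "pair_diff n (last_col_of A X0) = (1 / gamma_of A X0) \<cdot>\<^sub>v ((A - lam A \<cdot>\<^sub>m 1\<^sub>m n) *\<^sub>v X0)"
proof -
  define v where "v = P2_of A *\<^sub>v phi2 X0"
  have Y2: "phi2 X0 \<in> carrier_vec (2*n)" using X0 by (simp add: phi2_def)
  have v: "pair_diff n v = (A - lam A \<cdot>\<^sub>m 1\<^sub>m n) *\<^sub>v X0"
    unfolding v_def pair_diff_P2_of_mult_vec[OF A Y2] pair_diff_phi2[OF X0] ..
  show ?thesis
  proof (rule eq_vecI)
    fix r assume "r < dim_vec ((1 / gamma_of A X0) \<cdot>\<^sub>v ((A - lam A \<cdot>\<^sub>m 1\<^sub>m n) *\<^sub>v X0))"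
    then have r: "r < n" using A by simp
    \<comment> \<open>beta is constant on each pair, so it cancels in the difference\<close>
    have "beta_of A X0 $ (2*r) = beta_of A X0 $ (2*r+1)"
      using r X0 by (simp add: beta_of_def Let_def)
    then have "pair_diff n (last_col_of A X0) $ r = pair_diff n v $ r / gamma_of A X0"
      using r X0 by (simp add: pair_diff_def last_col_of_def v_def diff_divide_distrib add_divide_distrib)
    then show "pair_diff n (last_col_of A X0) $ r
        = ((1 / gamma_of A X0) \<cdot>\<^sub>v ((A - lam A \<cdot>\<^sub>m 1\<^sub>m n) *\<^sub>v X0)) $ r"
      using r A unfolding v by simp
  qed (use A in \<open>simp add: pair_diff_def\<close>)
qed

lemma pow_P_of_mult_Y0_diff:
  assumes n: "n \<ge> 1" and A: "A \<in> carrier_mat n n" and X0: "X0 \<in> carrier_vec n"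
    and X0_0: "X0 $ 0 = 0"
  shows "(P_of A X0 ^\<^sub>m k *\<^sub>v Y0_of n) $ 0 - (P_of A X0 ^\<^sub>m k *\<^sub>v Y0_of n) $ 1
    = ((A - lam A \<cdot>\<^sub>m 1\<^sub>m n) ^\<^sub>m k *\<^sub>v X0) $ 0 / gamma_of A X0"
proof (cases k)
  case 0
  then show ?thesis using n X0 X0_0 P_of_carrier[OF X0, of A] by (simp add: Y0_of_def)
next
  case (Suc k')
  define M where "M = A - lam A \<cdot>\<^sub>m 1\<^sub>m n"
  have M: "M \<in> carrier_mat n n" using A by (auto simp: M_def)
  have P2: "P2_of A \<in> carrier_mat (2*n) (2*n)" using P2_of_carrier[OF A] .
  have w: "last_col_of A X0 \<in> carrier_vec (2*n)" using last_col_of_carrier[OF X0] .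
  have "(P_of A X0 ^\<^sub>m k *\<^sub>v Y0_of n) $ 0 - (P_of A X0 ^\<^sub>m k *\<^sub>v Y0_of n) $ 1
      = pair_diff n (P2_of A ^\<^sub>m k' *\<^sub>v last_col_of A X0) $ 0"
    using n P2 w unfolding Suc pow_P_of_mult_Y0[OF A X0] by (simp add: pair_diff_def)
  also have "\<dots> = (M ^\<^sub>m k' *\<^sub>v pair_diff n (last_col_of A X0)) $ 0"
    by (subst pow_mat_mult_vec_intertwine[where D = "pair_diff n", OF P2 M pair_diff_carrier _ w])
      (simp_all add: M_def pair_diff_P2_of_mult_vec[OF A])
  also have "\<dots> = (M ^\<^sub>m k *\<^sub>v X0) $ 0 / gamma_of A X0"
    unfolding pair_diff_last_col_of[OF A X0] M_def[symmetric] Suc pow_mat_Suc_mult_vec_right[OF M X0]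
    using n M X0 by (simp add: mult_mat_vec[OF pow_carrier_mat[OF M] mult_mat_vec_carrier[OF M X0]])
  finally show ?thesis by (simp add: M_def)
qed

lemma mat_exp_P_of_Y0_diff:
  assumes n: "n \<ge> 1" and A: "A \<in> carrier_mat n n" and X0: "X0 \<in> carrier_vec n"
    and X0_0: "X0 $ 0 = 0"
  shows "(mat_exp (P_of A X0) t *\<^sub>v Y0_of n) $ 0 - (mat_exp (P_of A X0) t *\<^sub>v Y0_of n) $ 1
    = (mat_exp (A - lam A \<cdot>\<^sub>m 1\<^sub>m n) t *\<^sub>v X0) $ 0 / gamma_of A X0"
proof -
  have P: "P_of A X0 \<in> carrier_mat (2*n+1) (2*n+1)" using P_of_carrier[OF X0] .
  have M: "A - lam A \<cdot>\<^sub>m 1\<^sub>m n \<in> carrier_mat n n" using A by auto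
  have "t ^ k / fact k * (P_of A X0 ^\<^sub>m k *\<^sub>v Y0_of n) $ 0
      - t ^ k / fact k * (P_of A X0 ^\<^sub>m k *\<^sub>v Y0_of n) $ 1
      = t ^ k / fact k * ((A - lam A \<cdot>\<^sub>m 1\<^sub>m n) ^\<^sub>m k *\<^sub>v X0) $ 0 / gamma_of A X0" for k
    unfolding right_diff_distrib[symmetric] pow_P_of_mult_Y0_diff[OF n A X0 X0_0] by simp
  then have "(\<lambda>k. t ^ k / fact k * ((A - lam A \<cdot>\<^sub>m 1\<^sub>m n) ^\<^sub>m k *\<^sub>v X0) $ 0 / gamma_of A X0)
      sums ((mat_exp (P_of A X0) t *\<^sub>v Y0_of n) $ 0 - (mat_exp (P_of A X0) t *\<^sub>v Y0_of n) $ 1)"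
    using n sums_diff[OF mat_exp_mult_vec_sums[OF P Y0_of_carrier, of 0 t]
        mat_exp_mult_vec_sums[OF P Y0_of_carrier, of 1 t]]
    by simp
  moreover have "(\<lambda>k. t ^ k / fact k * ((A - lam A \<cdot>\<^sub>m 1\<^sub>m n) ^\<^sub>m k *\<^sub>v X0) $ 0 / gamma_of A X0)
      sums ((mat_exp (A - lam A \<cdot>\<^sub>m 1\<^sub>m n) t *\<^sub>v X0) $ 0 / gamma_of A X0)"
    using n by (intro sums_divide mat_exp_mult_vec_sums[OF M X0]) auto
  ultimately show ?thesis by (rule sums_unique2)
qed

section \<open>Sign pattern of P\<close>

lemma P2_of_off_diag_nonneg:
  assumes "A \<in> carrier_mat n n" "i < 2*n" "j < 2*n" "i \<noteq> j"
  shows "P2_of A $$ (i,j) \<ge> 0"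
  using assms by (simp add: P2_of_entry)

lemma row_sum_P2_of_le:
  assumes A: "A \<in> carrier_mat n n" and i: "i < 2*n"
  shows "(\<Sum>j<2*n. P2_of A $$ (i,j)) \<le> -1"
proof -
  have "(\<Sum>j<2*n. P2_of A $$ (i,j)) = (\<Sum>l<n. P2_of A $$ (i,2*l) + P2_of A $$ (i,2*l+1))"
    by (rule sum_lessThan_double)
  also have "\<dots> = (\<Sum>l<n. \<bar>A $$ (i div 2, l)\<bar> - (if i div 2 = l then lam A else 0))"
  proof (intro sum.cong refl)
    fix l assume "l \<in> {..<n}"
    then have l: "l < n" by simp
    have "i = 2*l \<or> i = 2*l+1 \<or> i div 2 \<noteq> l" "i mod 2 = 0 \<or> i mod 2 = 1" by presburger+
    then show "P2_of A $$ (i,2*l) + P2_of A $$ (i,2*l+1)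
        = \<bar>A $$ (i div 2, l)\<bar> - (if i div 2 = l then lam A else 0)"
      using i l by (auto simp: P2_of_entry[OF A] max_def)
  qed
  also have "\<dots> = (\<Sum>l<n. \<bar>A $$ (i div 2, l)\<bar>) - lam A"
    using i by (simp add: sum_subtractf)
  also have "(\<Sum>l<n. \<bar>A $$ (i div 2, l)\<bar>) \<le> lam A - 1"
    unfolding lam_def using A i by (auto intro!: Max_ge)
  finally show ?thesis by simp
qed

lemma last_col_of_bounds:
  assumes X0: "X0 \<in> carrier_vec n" and g: "gamma_of A X0 > 0" and i: "i < 2*n"
  shows "0 \<le> last_col_of A X0 $ i" "last_col_of A X0 $ i \<le> 1"
proof -
  have "i = 2 * (i div 2) \<or> i = 2 * (i div 2) + 1" by presburger
  then have "0 \<le> (P2_of A *\<^sub>v phi2 X0) $ i + beta_of A X0 $ i"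
    using X0 i by (auto simp: beta_of_def Let_def)
  moreover have "(P2_of A *\<^sub>v phi2 X0) $ i + beta_of A X0 $ i \<le> gamma_of A X0"
    unfolding gamma_of_def Let_def using X0 i by (intro Max_ge) auto
  ultimately show "0 \<le> last_col_of A X0 $ i" "last_col_of A X0 $ i \<le> 1"
    using X0 i g by (simp_all add: last_col_of_def)
qed

lemma P_of_off_diag_nonneg:
  assumes "A \<in> carrier_mat n n" "X0 \<in> carrier_vec n" "gamma_of A X0 > 0"
    and "i < 2*n+1" "j < 2*n+1" "i \<noteq> j"
  shows "P_of A X0 $$ (i,j) \<ge> 0"
  using assms P2_of_off_diag_nonneg[OF assms(1)] last_col_of_bounds(1)[OF assms(2,3)]
  by (simp add: P_of_entry)

lemma P_of_row_sum_nonpos: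
  assumes A: "A \<in> carrier_mat n n" and X0: "X0 \<in> carrier_vec n" and g: "gamma_of A X0 > 0"
    and i: "i < 2*n+1"
  shows "(\<Sum>j<2*n+1. P_of A X0 $$ (i,j)) \<le> 0"
proof (cases "i < 2*n")
  case True
  have "(\<Sum>j<2*n+1. P_of A X0 $$ (i,j)) = (\<Sum>j<2*n. P2_of A $$ (i,j)) + last_col_of A X0 $ i"
    using True X0 by (simp add: P_of_entry)
  then show ?thesis
    using row_sum_P2_of_le[OF A True] last_col_of_bounds(2)[OF X0 g True] by simp
next
  case False
  then show ?thesis using i X0 by (simp add: P_of_entry)
qed

theorem mainTheorem5:
  fixes A :: "real mat" and X0 :: "real vec" and n :: nat
  assumes "n \<ge> 1"
    and "A \<in> carrier_mat n n" and "X0 \<in> carrier_vec n"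
    and "\<forall>i<n. \<forall>j<n. A $$ (i,j) \<in> \<rat>"
    and "\<forall>i<n. X0 $ i \<in> \<rat>"
    and "X0 $ 0 = 0"
    and "gamma_of A X0 > 0"
  shows "(\<forall>t::real. (mat_exp A t *\<^sub>v X0) $ 0 =
           gamma_of A X0 * exp (lam A * t) *
           ((mat_exp (P_of A X0) t *\<^sub>v Y0_of n) $ 0 - (mat_exp (P_of A X0) t *\<^sub>v Y0_of n) $ 1))
       \<and> (\<forall>i < 2*n+1. \<forall>j < 2*n+1. i \<noteq> j \<longrightarrow> P_of A X0 $$ (i,j) \<ge> 0)
       \<and> (\<forall>i < 2*n+1. (\<Sum>j<2*n+1. P_of A X0 $$ (i,j)) \<le> 0)"
proof (intro conjI allI impI)
  note n = assms(1) and A = assms(2) and X0 = assms(3) and X0_0 = assms(6) and g = assms(7)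
  fix t :: real
  show "(mat_exp A t *\<^sub>v X0) $ 0 = gamma_of A X0 * exp (lam A * t) *
      ((mat_exp (P_of A X0) t *\<^sub>v Y0_of n) $ 0 - (mat_exp (P_of A X0) t *\<^sub>v Y0_of n) $ 1)"
    using mat_exp_mult_vec_shift[OF A X0, of 0 t "lam A"] mat_exp_P_of_Y0_diff[OF n A X0 X0_0, of t] n g
    by simp
next
  fix i j assume "i < 2*n+1" "j < 2*n+1" "i \<noteq> j"
  then show "P_of A X0 $$ (i,j) \<ge> 0"
    using P_of_off_diag_nonneg[OF assms(2,3,7)] by blast
next
  fix i assume "i < 2*n+1"
  then show "(\<Sum>j<2*n+1. P_of A X0 $$ (i,j)) \<le> 0"
    by (rule P_of_row_sum_nonpos[OF assms(2,3,7)])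
qed

end
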